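(* For all natural numbers $n,b\ge1$, $$s\big(2n^2b^2+2nb+1,\,2nb^2\big)=\frac{2n^2b^2-3nb^2+1}{12nb^2}.$$
   Context: For an integer $q\neq0$ and an integer $p$ (or residue class of $p$ mod $q$), the Dedekind sum is $$s(p,q)=\sum_{i=1}^{|q|}\Big(\Big(\frac{i}{q}\Big)\Big)\Big(\Big(\frac{pi}{q}\Big)\Big),$$ where $((x))=0$ if $x\in\mathbb{Z}$ and $((x))=x-\lfloor x\rfloor-\tfrac12$ otherwise. *)

theory Defs
  imports Complex_Main
begin

definition sawtooth :: "real \<Rightarrow> real" where
  "sawtooth x = (if x \<in> \<int> then 0 else x - of_int \<lfloor>x\<rfloor> - 1/2)"

definition dedekind_sum :: "int \<Rightarrow> int \<Rightarrow> real" where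
  "dedekind_sum p q = (\<Sum>i\<in>{1..\<bar>q\<bar>}. sawtooth (of_int i / of_int q) * sawtooth (of_int (p * i) / of_int q))"

end

theory Submission
  imports Defs "HOL-Number_Theory.Modular_Inverse"
begin

(* For coprime p and q > 0, the map i \<mapsto> p i mod q permutes {1..<q} and the centred values
   i/q - 1/2 sum to zero, so s(p,q) = q^-2 \<Sum>_{i<q} i (p i mod q) - (q - 1)/4.
   For q = c b^2 and p = c b + 1, write i = k b + r with k < c b and r < b: then
   p i mod q = ((k + c r) mod c b) b + r, i.e. multiplication by p rotates the high digit k by c r
   and fixes the low digit r.  Over a rotation, \<Sum>_{k<M} k ((k + s) mod M) = \<Sum>_{k<M} k^2 - M s (M - s)/2,
   so the whole sum is a quadratic polynomial in r summed over r < b, which gives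
   s(c b + 1, c b^2) = (c^2 b^2 - 3 c b^2 + 2) / (12 c b^2).
   The theorem is the case c = 2n, since s(p,q) only depends on p mod q. *)

lemma sawtooth_add_of_int: "sawtooth (x + of_int m) = sawtooth x"
proof -
  have "x + of_int m \<in> \<int> \<longleftrightarrow> x \<in> \<int>"
    by auto
  then show ?thesis
    by (simp add: sawtooth_def)
qed

lemma sawtooth_of_int_div:
  assumes "q > 0" and "\<not> q dvd y"
  shows "sawtooth (of_int y / of_int q) = of_int (y mod q) / of_int q - 1/2"
proof -
  have "of_int y / of_int q \<notin> (\<int> :: real set)"
  proof
    assume "of_int y / of_int q \<in> (\<int> :: real set)"
    then obtain x where "of_int y / of_int q = (of_int x :: real)"
      by (auto elim: Ints_cases)
    then have "y = q * x"
      using assms(1) by (simp add: field_simps flip: of_int_mult)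
    with assms(2) show False
      by simp
  qed
  moreover have "of_int y / of_int q - of_int (y div q) = of_int (y mod q) / (of_int q :: real)"
    using assms(1) by (simp add: field_simps flip: of_int_mult of_int_add)
  ultimately show ?thesis
    by (simp add: sawtooth_def floor_divide_of_int_eq)
qed

lemma sum_centred_residues:
  fixes q :: int
  shows "(\<Sum>i\<in>{1..<q}. of_int i / of_int q - 1/2 :: real) = 0"
proof -
  have "(\<Sum>i\<in>{1..<q}. of_int i / of_int q - 1/2 :: real)
      = (\<Sum>i\<in>{1..<q}. of_int (q - i) / of_int q - 1/2)"
    by (rule sum.reindex_bij_witness[of _ "\<lambda>i. q - i" "\<lambda>i. q - i"]) auto
  also have "\<dots> = (\<Sum>i\<in>{1..<q}. - (of_int i / of_int q - 1/2))"
    by (rule sum.cong) (auto simp: field_simps)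
  also have "\<dots> = - (\<Sum>i\<in>{1..<q}. of_int i / of_int q - 1/2)"
    by (rule sum_negf)
  finally show ?thesis
    by linarith
qed

lemma dedekind_sum_add_mult: "dedekind_sum (p + m * q) q = dedekind_sum p q"
proof (cases "q = 0")
  case False
  then have "of_int ((p + m * q) * i) / of_int q = of_int (p * i) / of_int q + (of_int (m * i) :: real)"
    for i
    by (simp add: field_simps)
  then show ?thesis
    by (simp only: dedekind_sum_def sawtooth_add_of_int)
qed (simp add: dedekind_sum_def)

lemma dedekind_sum_coprime:
  fixes p q :: int
  assumes "q > 0" and "coprime p q"
  shows "dedekind_sum p q
    = (\<Sum>i\<in>{0..<q}. of_int (i * (p * i mod q))) / of_int q ^ 2 - (of_int q - 1) / 4"
proof -
  define a :: "int \<Rightarrow> real" where "a i = of_int i / of_int q - 1/2" for i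
  define x where "x i = p * i mod q" for i
  define t where "t i = sawtooth (of_int i / of_int q) * sawtooth (of_int (p * i) / of_int q)" for i
  have bij: "bij_betw x {1..<q} {1..<q}"
    unfolding x_def by (rule bij_betw_int_remainders_mult[OF assms(2)])
  have "t i = a i * a (x i)" if "i \<in> {1..<q}" for i
  proof -
    have "x i \<in> {1..<q}"
      using bij that by (auto dest: bij_betw_apply)
    then have "\<not> q dvd p * i"
      by (auto simp: x_def dvd_eq_mod_eq_0)
    moreover have "\<not> q dvd i" and "i mod q = i"
      using that zdvd_not_zless by auto
    ultimately show ?thesis
      using assms(1) by (simp only: t_def sawtooth_of_int_div a_def x_def not_False_eq_True)
  qed
  moreover have "t q = 0"
    using assms(1) by (simp add: t_def sawtooth_def)
  moreover have "{1..\<bar>q\<bar>} = insert q {1..<q}"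
    using assms(1) by auto
  ultimately have dedekind_sum_eq: "dedekind_sum p q = (\<Sum>i\<in>{1..<q}. a i * a (x i))"
    unfolding dedekind_sum_def t_def[symmetric] by simp
  have sum_a: "(\<Sum>i\<in>{1..<q}. a i) = 0"
    unfolding a_def by (rule sum_centred_residues)
  have sum_a_x: "(\<Sum>i\<in>{1..<q}. a (x i)) = 0"
    using sum.reindex_bij_betw[OF bij, of a] sum_a by simp
  have "{0..<q} = insert 0 {1..<q}"
    using assms(1) by auto
  then have "(\<Sum>i\<in>{0..<q}. of_int (i * x i)) / of_int q ^ 2
      = (\<Sum>i\<in>{1..<q}. (a i + 1/2) * (a (x i) + 1/2))"
    by (simp add: a_def sum_divide_distrib power2_eq_square)
  also have "\<dots> = (\<Sum>i\<in>{1..<q}. a i * a (x i))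
      + ((\<Sum>i\<in>{1..<q}. a i) + (\<Sum>i\<in>{1..<q}. a (x i))) / 2 + (of_int q - 1) / 4"
    using assms(1) by (simp add: algebra_simps sum.distrib flip: sum_divide_distrib)
  finally show ?thesis
    using sum_a sum_a_x unfolding dedekind_sum_eq x_def by simp
qed

lemma dedekind_sum_of_nat_coprime:
  fixes p q :: nat
  assumes "q > 0" and "coprime p q"
  shows "dedekind_sum (int p) (int q)
    = (\<Sum>i<q. real i * real (p * i mod q)) / real q ^ 2 - (real q - 1) / 4"
proof -
  have "{0..<int q} = int ` {..<q}"
    by (simp add: image_int_atLeastLessThan lessThan_atLeast0)
  then have "(\<Sum>i\<in>{0..<int q}. real_of_int (i * (int p * i mod int q)))
      = (\<Sum>i<q. real i * real (p * i mod q))"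
    by (simp add: sum.reindex flip: of_nat_mult zmod_int)
  then show ?thesis
    using dedekind_sum_coprime[of "int q" "int p"] assms by simp
qed

lemma sum_of_nat_lessThan:
  "(\<Sum>k<m. of_nat k :: 'a :: field_char_0) = of_nat m * (of_nat m - 1) / 2"
  by (induction m) (simp_all add: field_simps)

lemma sum_of_nat_squared_lessThan:
  "(\<Sum>k<m. of_nat k ^ 2 :: 'a :: field_char_0) = of_nat m * (of_nat m - 1) * (2 * of_nat m - 1) / 6"
  by (induction m) (simp_all add: field_simps power2_eq_square)

lemma sum_quadratic_lessThan:
  fixes A B C :: "'a :: field_char_0"
  shows "(\<Sum>r<m. A + B * of_nat r + C * of_nat r ^ 2)
    = A * of_nat m + B * (of_nat m * (of_nat m - 1) / 2)
      + C * (of_nat m * (of_nat m - 1) * (2 * of_nat m - 1) / 6)"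
  by (simp add: sum.distrib sum_of_nat_lessThan sum_of_nat_squared_lessThan flip: sum_distrib_left)

lemma sum_lessThan_mult_nat:
  fixes m n :: nat
  shows "(\<Sum>i<m * n. f i) = (\<Sum>k<m. \<Sum>r<n. f (k * n + r))"
proof -
  have "(\<Sum>i\<in>{k * n..<k * n + n}. f i) = (\<Sum>r<n. f (k * n + r))" for k
    using sum.shift_bounds_nat_ivl[of f 0 "k * n" n] by (simp add: atLeast0LessThan ac_simps)
  then show ?thesis
    using sum.nat_group[of f n m] by simp
qed

lemma bij_betw_add_mod:
  fixes s M :: nat
  shows "bij_betw (\<lambda>k. (k + s) mod M) {..<M} {..<M}"
proof (rule bij_betw_imageI)
  show "inj_on (\<lambda>k. (k + s) mod M) {..<M}"
    by (rule inj_onI) (metis cong_add_rcancel_nat cong_def lessThan_iff mod_less)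
  then show "(\<lambda>k. (k + s) mod M) ` {..<M} = {..<M}"
    by (intro endo_inj_surj) auto
qed

lemma sum_mult_add_mod:
  fixes M s :: nat
  assumes "s \<le> M"
  shows "(\<Sum>k<M. real k * real ((k + s) mod M))
    = (\<Sum>k<M. real k ^ 2) - real M * real s * (real M - real s) / 2"
proof -
  have pointwise: "real k * real ((k + s) mod M)
      = real k ^ 2 + real s * real k - real M * (if M - s \<le> k then real k else 0)"
    if "k < M" for k
  proof (cases "M - s \<le> k")
    case True
    then have "(k + s) mod M = k + s - M"
      using that assms by (simp add: mod_if le_mod_geq)
    then show ?thesis
      using True assms by (simp add: algebra_simps power2_eq_square)
  next
    case False
    then show ?thesis
      by (simp add: algebra_simps power2_eq_square)
  qed
  have "{k \<in> {..<M}. M - s \<le> k} = {M - s..<M}"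
    by auto
  then have "(\<Sum>k<M. if M - s \<le> k then real k else 0) = (\<Sum>k\<in>{M - s..<M}. real k)"
    by (simp flip: sum.inter_filter)
  with pointwise have "(\<Sum>k<M. real k * real ((k + s) mod M))
      = (\<Sum>k<M. real k ^ 2) + real s * (\<Sum>k<M. real k) - real M * (\<Sum>k\<in>{M - s..<M}. real k)"
    by (simp add: sum.distrib sum_subtractf flip: sum_distrib_left)
  moreover have "(\<Sum>k\<in>{M - s..<M}. real k) = real s * (2 * real M - real s - 1) / 2"
  proof -
    have "(\<Sum>k<M - s. real k) + (\<Sum>k\<in>{M - s..<M}. real k) = (\<Sum>k<M. real k)"
      using sum.atLeastLessThan_concat[of 0 "M - s" M real] by (simp add: atLeast0LessThan)
    then show ?thesis
      using assms by (simp add: sum_of_nat_lessThan field_simps)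
  qed
  ultimately show ?thesis
    by (simp add: sum_of_nat_lessThan field_simps)
qed

lemma sum_rotated_digit_products:
  fixes M s b r :: nat
  assumes "s \<le> M"
  shows "(\<Sum>k<M. real (k * b + r) * real (((k + s) mod M) * b + r))
    = real b ^ 2 * ((\<Sum>k<M. real k ^ 2) - real M * real s * (real M - real s) / 2)
      + real r * real b * real M * (real M - 1) + real M * real r ^ 2"
proof -
  have rotation_invariant: "(\<Sum>k<M. real ((k + s) mod M)) = (\<Sum>k<M. real k)"
    using sum.reindex_bij_betw[OF bij_betw_add_mod, of real s M] by simp
  have "(\<Sum>k<M. real (k * b + r) * real (((k + s) mod M) * b + r))
      = real b ^ 2 * (\<Sum>k<M. real k * real ((k + s) mod M))
        + real r * real b * ((\<Sum>k<M. real k) + (\<Sum>k<M. real ((k + s) mod M)))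
        + real M * real r ^ 2"
    by (simp add: algebra_simps sum.distrib sum_distrib_left power2_eq_square)
  then show ?thesis
    using assms by (simp add: sum_mult_add_mod rotation_invariant sum_of_nat_lessThan field_simps)
qed

lemma mult_succ_mod_digits:
  fixes b c k r :: nat
  assumes "r < b"
  shows "((c * b + 1) * (k * b + r)) mod (c * b * b) = ((k + c * r) mod (c * b)) * b + r"
proof -
  have "(c * b + 1) * (k * b + r) = (b * (k + c * r) + r) + k * (c * b * b)"
    by (simp add: algebra_simps)
  then have "((c * b + 1) * (k * b + r)) mod (c * b * b) = (b * (k + c * r) + r) mod (b * (c * b))"
    by (simp only: mod_mult_self1) (simp add: ac_simps)
  also have "\<dots> = ((k + c * r) mod (c * b)) * b + r"
    using assms by (simp add: mod_mult2_eq mult.commute)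
  finally show ?thesis .
qed

lemma sum_mult_mod_succ:
  fixes b c :: nat
  shows "(\<Sum>i<c * b * b. real i * real ((c * b + 1) * i mod (c * b * b)))
    = real c * real b ^ 2
      * (3 * real c ^ 2 * real b ^ 4 + real c ^ 2 * real b ^ 2 - 6 * real c * real b ^ 2 + 2) / 12"
proof -
  have "(\<Sum>i<c * b * b. real i * real ((c * b + 1) * i mod (c * b * b)))
      = (\<Sum>r<b. \<Sum>k<c * b. real (k * b + r) * real ((c * b + 1) * (k * b + r) mod (c * b * b)))"
    by (subst sum_lessThan_mult_nat) (rule sum.swap)
  also have "\<dots> = (\<Sum>r<b. real b ^ 2 * (\<Sum>k<c * b. real k ^ 2)
      + (real b * real (c * b) * (real (c * b) - 1) - real c ^ 3 * real b ^ 4 / 2) * real r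
      + (real c ^ 3 * real b ^ 3 / 2 + real (c * b)) * real r ^ 2)"
  proof (intro sum.cong refl)
    fix r
    assume "r \<in> {..<b}"
    then have "r < b" and "c * r \<le> c * b"
      by simp_all
    then show "(\<Sum>k<c * b. real (k * b + r) * real ((c * b + 1) * (k * b + r) mod (c * b * b)))
      = real b ^ 2 * (\<Sum>k<c * b. real k ^ 2)
        + (real b * real (c * b) * (real (c * b) - 1) - real c ^ 3 * real b ^ 4 / 2) * real r
        + (real c ^ 3 * real b ^ 3 / 2 + real (c * b)) * real r ^ 2"
      by (simp only: mult_succ_mod_digits sum_rotated_digit_products)
        (simp add: field_simps power2_eq_square power3_eq_cube power4_eq_xxxx)
  qed
  also have "\<dots> = real c * real b ^ 2
      * (3 * real c ^ 2 * real b ^ 4 + real c ^ 2 * real b ^ 2 - 6 * real c * real b ^ 2 + 2) / 12"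
    by (simp only: sum_quadratic_lessThan sum_of_nat_squared_lessThan)
      (simp add: field_simps power2_eq_square power3_eq_cube power4_eq_xxxx)
  finally show ?thesis .
qed

lemma dedekind_sum_mult_succ:
  fixes b c :: nat
  assumes "b > 0" and "c > 0"
  shows "dedekind_sum (int (c * b + 1)) (int (c * b * b))
    = (real c ^ 2 * real b ^ 2 - 3 * real c * real b ^ 2 + 2) / (12 * real c * real b ^ 2)"
proof -
  have "coprime (c * b + 1) (c * b * b)"
    by (metis coprime_add_one_left coprime_mult_right_iff)
  then have "dedekind_sum (int (c * b + 1)) (int (c * b * b))
      = (\<Sum>i<c * b * b. real i * real ((c * b + 1) * i mod (c * b * b))) / real (c * b * b) ^ 2
        - (real (c * b * b) - 1) / 4"
    using assms by (intro dedekind_sum_of_nat_coprime) simp_all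
  also have "\<dots> = (real c ^ 2 * real b ^ 2 - 3 * real c * real b ^ 2 + 2) / (12 * real c * real b ^ 2)"
    using assms unfolding sum_mult_mod_succ by (simp add: field_simps power2_eq_square power4_eq_xxxx)
  finally show ?thesis .
qed

theorem corollary2:
  fixes n b :: nat
  assumes "n \<ge> 1" and "b \<ge> 1"
  shows "dedekind_sum (2 * int n^2 * int b^2 + 2 * int n * int b + 1) (2 * int n * int b^2)
         = (2 * real n^2 * real b^2 - 3 * real n * real b^2 + 1) / (12 * real n * real b^2)"
proof -
  have "2 * int n^2 * int b^2 + 2 * int n * int b + 1 = int (2 * n * b + 1) + int n * int (2 * n * b * b)"
    and "2 * int n * int b^2 = int (2 * n * b * b)"
    by (simp_all add: power2_eq_square)
  then have "dedekind_sum (2 * int n^2 * int b^2 + 2 * int n * int b + 1) (2 * int n * int b^2)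
      = dedekind_sum (int (2 * n * b + 1)) (int (2 * n * b * b))"
    by (simp only: dedekind_sum_add_mult)
  also have "\<dots> = (real (2 * n) ^ 2 * real b ^ 2 - 3 * real (2 * n) * real b ^ 2 + 2)
      / (12 * real (2 * n) * real b ^ 2)"
    using assms by (intro dedekind_sum_mult_succ) simp_all
  also have "\<dots> = (2 * real n^2 * real b^2 - 3 * real n * real b^2 + 1) / (12 * real n * real b^2)"
    using assms by (simp add: field_simps power2_eq_square)
  finally show ?thesis .
qed

end
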